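(* Let $q\in\mathcal{X}$ be pathless. Then $E\big(D(q)\big)=B\big(A(q)\big)$ (as elements of $\mathcal{T}[[w]]$).
   Context: Let $\mathbf{k}$ be a commutative ring, $\beta,\alpha\in\mathbf{k}$, $n$ a positive integer; write $[m]=\{1,\dots,m\}$. Let $\mathcal{X}=\mathbf{k}[x_{i,j}\mid 1\le i<j\le n]$ (polynomial ring). A monomial in the $x_{i,j}$ is pathless if there is no triple $1\le i<j<k\le n$ with $x_{i,j}x_{j,k}$ dividing it; a polynomial is pathless if it is a $\mathbf{k}$-linear combination of pathless monomials. Laurent series: for symbols $r_1,\dots,r_n$, a Laurent series over $\mathbf{k}$ is a formal sum $\sum_{a\in\mathbb{Z}^n}\lambda_a r_1^{a_1}\cdots r_n^{a_n}$ ($\lambda_a\in\mathbf{k}$) for which there is $d\in\mathbb{Z}$ with $\lambda_a=0$ whenever some $a_i<d$. Let $\mathcal{Q}$ be the $\mathbf{k}$-algebra of such series with the usual multiplication and coefficientwise (product) topology, $\mathbf{k}$ discrete. For $i\in[n]$ put $q_i=r_ir_{i+1}\cdots r_n$; every Laurent monomial is uniquely of the form $q_1^{a_1}\cdots q_n^{a_n}$, $a\in\mathbb{Z}^n$, so every element of $\mathcal{Q}$ is uniquely an infinite sum $\sum_a\mu_a q_1^{a_1}\cdots q_n^{a_n}$; for $i<j$, $1-q_i/q_j=1-r_i\cdots r_{j-1}$ is invertible. Let $A:\mathcal{X}\to\mathcal{Q}$ be the $\mathbf{k}$-algebra homomorphism with $A(x_{i,j})=-\dfrac{q_i+\beta+\alpha/q_j}{1-q_i/q_j}$.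 Let $\mathcal{T}=\mathbf{k}[[t_1,\dots,t_n]]$ and $\mathcal{T}[[w]]$ the formal power series ring in a further indeterminate $w$ over $\mathcal{T}$ (coefficientwise topology). Let $B:\mathcal{Q}\to\mathcal{T}[[w]]$ be the continuous $\mathbf{k}$-linear map $B\big(\sum_a\mu_a q_1^{a_1}\cdots q_n^{a_n}\big)=\sum_a\mu_a\prod_{i:\,a_i>0}t_i^{a_i}\prod_{i:\,a_i<0}w^{-a_i}$ (convergent since each monomial in $t_1,\dots,t_n,w$ arises from only finitely many $a$); $B$ is in general not multiplicative. Let $\mathcal{T}'=\mathbf{k}[t_1,\dots,t_{n-1}]\subseteq\mathcal{T}$, so $\mathcal{T}'[[w]]\subseteq\mathcal{T}[[w]]$; let $D:\mathcal{X}\to\mathcal{T}'$ be the $\mathbf{k}$-algebra homomorphism with $D(x_{i,j})=t_i$, and $E:\mathcal{T}'\to\mathcal{T}'[[w]]$ the $\mathbf{k}$-algebra homomorphism with $E(t_i)=-\dfrac{t_i+\beta+\alpha w}{1-t_iw}$. *)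

theory Defs
  imports "HOL-Library.Poly_Mapping" "HOL-Library.Product_Lexorder"
begin

(* Polynomial ring X = k[x_{i,j}]: elements of type ((nat \<times> nat) \<Rightarrow>\<^sub>0 nat) \<Rightarrow>\<^sub>0 'k
   (a monomial is an exponent map on the variable indices (i,j)).
   T' = k[t_1..t_{n-1}]: elements of type (nat \<Rightarrow>\<^sub>0 nat) \<Rightarrow>\<^sub>0 'k. *)

definition pathless_mon :: "((nat \<times> nat) \<Rightarrow>\<^sub>0 nat) \<Rightarrow> bool" where
  "pathless_mon m \<longleftrightarrow>
     \<not> (\<exists>i j k. i < j \<and> j < k \<and> Poly_Mapping.lookup m (i,j) > 0 \<and> Poly_Mapping.lookup m (j,k) > 0)"

definition pathless :: "(((nat \<times> nat) \<Rightarrow>\<^sub>0 nat) \<Rightarrow>\<^sub>0 'k::zero) \<Rightarrow> bool" where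
  "pathless q \<longleftrightarrow> (\<forall>m\<in>Poly_Mapping.keys q. pathless_mon m)"

(* ---------- Laurent series Q in r_1..r_n: coefficient function on r-exponent vectors ---------- *)
type_synonym 'a laurent = "(nat \<Rightarrow>\<^sub>0 int) \<Rightarrow> 'a"

definition lmult :: "'a::comm_ring_1 laurent \<Rightarrow> 'a laurent \<Rightarrow> 'a laurent" where
  "lmult f g = (\<lambda>c. \<Sum>a\<in>{a. f a \<noteq> 0 \<and> g (c - a) \<noteq> 0}. f a * g (c - a))"

definition lone :: "'a::comm_ring_1 laurent" where
  "lone = (\<lambda>c. if c = 0 then 1 else 0)"

definition lmon :: "(nat \<Rightarrow>\<^sub>0 int) \<Rightarrow> 'a::comm_ring_1 laurent" where
  "lmon b = (\<lambda>c. if c = b then 1 else 0)"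

primrec lpow :: "'a::comm_ring_1 laurent \<Rightarrow> nat \<Rightarrow> 'a laurent" where
  "lpow f 0 = lone"
| "lpow f (Suc k) = lmult f (lpow f k)"

(* r-exponent vector of q_i = r_i r_{i+1} ... r_n *)
definition qexp :: "nat \<Rightarrow> nat \<Rightarrow> (nat \<Rightarrow>\<^sub>0 int)" where
  "qexp n i = (\<Sum>j\<in>{i..n}. Poly_Mapping.single j 1)"

(* (1 - q_i/q_j)^{-1} = (1 - r_i \<cdots> r_{j-1})^{-1} = \<Sum>_{m\<ge>0} (r_i \<cdots> r_{j-1})^m *)
definition lgeom :: "nat \<Rightarrow> nat \<Rightarrow> 'a::comm_ring_1 laurent" where
  "lgeom i j = (\<lambda>c. if \<exists>m::nat. c = (\<Sum>l\<in>{i..<j}. Poly_Mapping.single l (int m)) then 1 else 0)"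

(* A(x_{i,j}) = -(q_i + \<beta> + \<alpha>/q_j) / (1 - q_i/q_j) *)
definition A_x :: "nat \<Rightarrow> 'a::comm_ring_1 \<Rightarrow> 'a \<Rightarrow> nat \<Rightarrow> nat \<Rightarrow> 'a laurent" where
  "A_x n \<beta> \<alpha> i j =
     lmult (\<lambda>c. - (lmon (qexp n i) c + \<beta> * lone c + \<alpha> * lmon (- qexp n j) c)) (lgeom i j)"

definition A_mon :: "nat \<Rightarrow> 'a::comm_ring_1 \<Rightarrow> 'a \<Rightarrow> ((nat \<times> nat) \<Rightarrow>\<^sub>0 nat) \<Rightarrow> 'a laurent" where
  "A_mon n \<beta> \<alpha> m =
     foldr (\<lambda>v acc. lmult (lpow (A_x n \<beta> \<alpha> (fst v) (snd v)) (Poly_Mapping.lookup m v)) acc)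
           (sorted_list_of_set (Poly_Mapping.keys m)) lone"

definition A_map :: "nat \<Rightarrow> 'a::comm_ring_1 \<Rightarrow> 'a \<Rightarrow> (((nat \<times> nat) \<Rightarrow>\<^sub>0 nat) \<Rightarrow>\<^sub>0 'a) \<Rightarrow> 'a laurent" where
  "A_map n \<beta> \<alpha> q = (\<lambda>c. \<Sum>m\<in>Poly_Mapping.keys q. Poly_Mapping.lookup q m * A_mon n \<beta> \<alpha> m c)"

(* ---------- T[[w]] = k[[t_1..t_n]][[w]]: coefficient function on (t-exponent, w-exponent) ---------- *)
type_synonym 'a tw = "(nat \<Rightarrow>\<^sub>0 nat) \<times> nat \<Rightarrow> 'a"

(* r-exponent vector of q_1^{a_1} \<cdots> q_n^{a_n} *)
definition q_to_r :: "nat \<Rightarrow> (nat \<Rightarrow>\<^sub>0 int) \<Rightarrow> (nat \<Rightarrow>\<^sub>0 int)" where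
  "q_to_r n a = (\<Sum>i\<in>{1..n}. \<Sum>j\<in>{i..n}. Poly_Mapping.single j (Poly_Mapping.lookup a i))"

(* B(\<Sum>_a \<mu>_a q^a) = \<Sum>_a \<mu>_a \<Prod>_{a_i>0} t_i^{a_i} \<Prod>_{a_i<0} w^{-a_i} *)
definition B_map :: "nat \<Rightarrow> 'a::comm_ring_1 laurent \<Rightarrow> 'a tw" where
  "B_map n f = (\<lambda>(e,k). \<Sum>a\<in>{a. Poly_Mapping.keys a \<subseteq> {1..n} \<and> (\<forall>i. max (Poly_Mapping.lookup a i) 0 = int (Poly_Mapping.lookup e i))
                                  \<and> (\<Sum>i\<in>{1..n}. nat (- Poly_Mapping.lookup a i)) = k}. f (q_to_r n a))"

definition pmult :: "'a::comm_ring_1 tw \<Rightarrow> 'a tw \<Rightarrow> 'a tw" where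
  "pmult f g = (\<lambda>(e,k). \<Sum>p\<in>{(e1,k1). (\<forall>i. Poly_Mapping.lookup e1 i \<le> Poly_Mapping.lookup e i) \<and> k1 \<le> k}.
                          f p * g (e - fst p, k - snd p))"

definition pone :: "'a::comm_ring_1 tw" where
  "pone = (\<lambda>(e,k). if e = 0 \<and> k = 0 then 1 else 0)"

primrec ppow :: "'a::comm_ring_1 tw \<Rightarrow> nat \<Rightarrow> 'a tw" where
  "ppow f 0 = pone"
| "ppow f (Suc k) = pmult f (ppow f k)"

(* E(t_i) = -(t_i + \<beta> + \<alpha> w) / (1 - t_i w), with (1 - t_i w)^{-1} = \<Sum>_m t_i^m w^m *)
definition E_t :: "'a::comm_ring_1 \<Rightarrow> 'a \<Rightarrow> nat \<Rightarrow> 'a tw" where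
  "E_t \<beta> \<alpha> i =
     pmult (\<lambda>(e,k). - ((if e = Poly_Mapping.single i 1 \<and> k = 0 then 1 else 0)
                        + (if e = 0 \<and> k = 0 then \<beta> else 0)
                        + (if e = 0 \<and> k = 1 then \<alpha> else 0)))
           (\<lambda>(e,k). if e = Poly_Mapping.single i k then 1 else 0)"

definition E_mon :: "'a::comm_ring_1 \<Rightarrow> 'a \<Rightarrow> (nat \<Rightarrow>\<^sub>0 nat) \<Rightarrow> 'a tw" where
  "E_mon \<beta> \<alpha> e =
     foldr (\<lambda>i acc. pmult (ppow (E_t \<beta> \<alpha> i) (Poly_Mapping.lookup e i)) acc) (sorted_list_of_set (Poly_Mapping.keys e)) pone"

definition E_map :: "'a::comm_ring_1 \<Rightarrow> 'a \<Rightarrow> ((nat \<Rightarrow>\<^sub>0 nat) \<Rightarrow>\<^sub>0 'a) \<Rightarrow> 'a tw" where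
  "E_map \<beta> \<alpha> p = (\<lambda>x. \<Sum>e\<in>Poly_Mapping.keys p. Poly_Mapping.lookup p e * E_mon \<beta> \<alpha> e x)"

(* the k-algebra homomorphism D : X \<rightarrow> T', x_{i,j} \<mapsto> t_i *)
definition D_map :: "(((nat \<times> nat) \<Rightarrow>\<^sub>0 nat) \<Rightarrow>\<^sub>0 'a::comm_ring_1) \<Rightarrow> ((nat \<Rightarrow>\<^sub>0 nat) \<Rightarrow>\<^sub>0 'a)" where
  "D_map q = (\<Sum>m\<in>Poly_Mapping.keys q.
     Poly_Mapping.single (\<Sum>v\<in>Poly_Mapping.keys m. Poly_Mapping.single (fst v) (Poly_Mapping.lookup m v)) (Poly_Mapping.lookup q m))"

end

theory Submission
  imports Defs "HOL-Library.Product_Plus"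
begin

text \<open>Write Laurent series in the basis \<open>q\<^sup>a\<close>, \<open>a \<in> \<int>\<^sup>n\<close>; then \<open>B\<close> sends \<open>q\<^sup>a\<close> to
  \<open>t\<^sup>a\<^sup>+ w\<^sup>|\<^sup>a\<^sup>-\<^sup>|\<close>. This is not multiplicative in general, but it is on series supported in a
  sign cone: for disjoint index sets \<open>L\<close>, \<open>R\<close>, the exponents that are \<open>\<ge> 0\<close> on \<open>L\<close>,
  \<open>\<le> 0\<close> on \<open>R\<close> and \<open>0\<close> elsewhere, where \<open>a \<mapsto> (a\<^sup>+, |a\<^sup>-|)\<close> is additive.
  For a pathless monomial \<open>m\<close> the first indices \<open>L\<close> and the second indices \<open>R\<close> of its
  variables are disjoint, every \<open>A(x\<^sub>i\<^sub>,\<^sub>j)\<close> occurring in \<open>A(m)\<close> is supported in that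
  cone, and a direct computation gives \<open>B(A(x\<^sub>i\<^sub>,\<^sub>j)) = E(t\<^sub>i)\<close>. Hence
  \<open>B(A(m)) = E(D(m))\<close>, and the theorem follows by linearity.\<close>

abbreviation lk where "lk \<equiv> Poly_Mapping.lookup"
abbreviation ks where "ks \<equiv> Poly_Mapping.keys"

lemma finite_poly_mappings_with_keys_values:
  assumes "finite K" "finite V"
  shows "finite {a :: 'a \<Rightarrow>\<^sub>0 'b::zero. ks a \<subseteq> K \<and> (\<forall>i. lk a i \<in> V)}"
proof -
  let ?S = "{a :: 'a \<Rightarrow>\<^sub>0 'b. ks a \<subseteq> K \<and> (\<forall>i. lk a i \<in> V)}"
  have "lk ` ?S \<subseteq> {f. \<forall>x. (x \<in> K \<longrightarrow> f x \<in> V) \<and> (x \<notin> K \<longrightarrow> f x = 0)}"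
    by (auto simp: in_keys_iff)
  moreover have "finite {f. \<forall>x. (x \<in> K \<longrightarrow> f x \<in> V) \<and> (x \<notin> K \<longrightarrow> f x = (0::'b))}"
    using assms by (intro finite_set_of_finite_funs)
  ultimately have "finite (lk ` ?S)"
    by (rule finite_subset)
  then show ?thesis
    by (rule finite_imageD) (simp add: inj_on_def)
qed

lemma lookup_le_sum_keys: "lk (e :: 'a \<Rightarrow>\<^sub>0 nat) i \<le> sum (lk e) (ks e)"
  using member_le_sum[of i "ks e" "lk e"] by (cases "i \<in> ks e") (auto simp: in_keys_iff)

section \<open>The product of \<open>T[[w]]\<close>\<close>

text \<open>Divisibility of the monomials \<open>t\<^sup>e w\<^sup>k\<close> of \<open>T[[w]]\<close>, represented by their exponents \<open>(e, k)\<close>.\<close>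

definition tw_dvd :: "(nat \<Rightarrow>\<^sub>0 nat) \<times> nat \<Rightarrow> (nat \<Rightarrow>\<^sub>0 nat) \<times> nat \<Rightarrow> bool" where
  "tw_dvd p x \<longleftrightarrow> (\<exists>r. x = p + r)"

definition tw_divisors :: "(nat \<Rightarrow>\<^sub>0 nat) \<times> nat \<Rightarrow> ((nat \<Rightarrow>\<^sub>0 nat) \<times> nat) set" where
  "tw_divisors x = {p. tw_dvd p x}"

lemma tw_dvd_iff_le:
  "tw_dvd p x \<longleftrightarrow> (\<forall>i. lk (fst p) i \<le> lk (fst x) i) \<and> snd p \<le> snd x"
proof
  assume "tw_dvd p x"
  then show "(\<forall>i. lk (fst p) i \<le> lk (fst x) i) \<and> snd p \<le> snd x"
    by (auto simp: tw_dvd_def lookup_add)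
next
  assume le: "(\<forall>i. lk (fst p) i \<le> lk (fst x) i) \<and> snd p \<le> snd x"
  have "x = p + (x - p)"
    using le by (cases p, cases x) (auto intro!: poly_mapping_eqI simp: lookup_add lookup_minus)
  then show "tw_dvd p x"
    unfolding tw_dvd_def ..
qed

lemma tw_dvd_add_diff_cancel: "tw_dvd p x \<Longrightarrow> p + (x - p) = x"
  by (auto simp: tw_dvd_def)

lemma tw_dvd_diff: "tw_dvd p x \<Longrightarrow> tw_dvd (x - p) x"
  by (metis tw_dvd_def add.commute add_diff_cancel_left')

lemma tw_diff_diff_cancel: "tw_dvd p x \<Longrightarrow> x - (x - p) = p"
  by (auto simp: tw_dvd_def)

lemma finite_tw_divisors: "finite (tw_divisors x)"
proof -
  let ?V = "{..sum (lk (fst x)) (ks (fst x))}"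
  have "tw_divisors x \<subseteq> {a. ks a \<subseteq> ks (fst x) \<and> (\<forall>i. lk a i \<in> ?V)} \<times> {..snd x}"
  proof (clarsimp simp: tw_divisors_def tw_dvd_iff_le)
    fix a assume "\<forall>i. lk a i \<le> lk (fst x) i"
    then show "ks a \<subseteq> ks (fst x) \<and> (\<forall>i. lk a i \<le> sum (lk (fst x)) (ks (fst x)))"
      by (auto simp: in_keys_iff intro: order.trans lookup_le_sum_keys) (metis gr0I le_zero_eq)
  qed
  moreover have "finite ({a. ks a \<subseteq> ks (fst x) \<and> (\<forall>i. lk a i \<in> ?V)} \<times> {..snd x})"
    by (intro finite_cartesian_product finite_poly_mappings_with_keys_values) auto
  ultimately show ?thesis
    by (rule finite_subset)
qed

lemma pmult_eq_sum_tw_divisors: "pmult f g x = (\<Sum>p\<in>tw_divisors x. f p * g (x - p))"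
  by (cases x) (simp add: pmult_def tw_divisors_def tw_dvd_iff_le case_prod_unfold minus_prod_def)

lemma pmult_commute: "pmult f g = pmult g f"
proof
  fix x
  show "pmult f g x = pmult g f x"
    unfolding pmult_eq_sum_tw_divisors
    by (rule sum.reindex_bij_witness[where i="\<lambda>p. x - p" and j="\<lambda>p. x - p"])
      (auto simp: tw_divisors_def tw_dvd_diff tw_diff_diff_cancel mult.commute)
qed

lemma pone_eq: "pone p = (if p = 0 then 1 else 0)"
  by (cases p) (simp add: pone_def zero_prod_def)

lemma pmult_pone_left: "pmult pone f = f"
proof
  fix x
  have "pmult pone f x = (\<Sum>p\<in>tw_divisors x. if p = 0 then f (x - p) else 0)"
    unfolding pmult_eq_sum_tw_divisors pone_eq by (rule sum.cong) auto
  also have "\<dots> = f x"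
    by (simp add: finite_tw_divisors) (simp add: tw_divisors_def tw_dvd_def)
  finally show "pmult pone f x = f x" .
qed

lemma pmult_pone_right: "pmult f pone = f"
  by (simp add: pmult_commute[of f] pmult_pone_left)

lemma pmult_assoc: "pmult (pmult f g) h = pmult f (pmult g h)"
proof
  fix x
  have "pmult (pmult f g) h x = (\<Sum>(p, p1)\<in>(SIGMA p:tw_divisors x. tw_divisors p). f p1 * g (p - p1) * h (x - p))"
    by (simp add: pmult_eq_sum_tw_divisors sum_distrib_right sum.Sigma finite_tw_divisors)
  also have "\<dots> = (\<Sum>(p1, p2)\<in>(SIGMA p1:tw_divisors x. tw_divisors (x - p1)). f p1 * (g p2 * h (x - p1 - p2)))"
    by (rule sum.reindex_bij_witness[where i="\<lambda>(p1, p2). (p1 + p2, p1)" and j="\<lambda>(p, p1). (p1, p - p1)"])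
      (auto simp: tw_divisors_def tw_dvd_def mult.assoc add.assoc diff_diff_add)
  also have "\<dots> = pmult f (pmult g h) x"
    by (simp add: pmult_eq_sum_tw_divisors sum_distrib_left sum.Sigma finite_tw_divisors)
  finally show "pmult (pmult f g) h x = pmult f (pmult g h) x" .
qed

lemma ppow_add: "ppow f (a + b) = pmult (ppow f a) (ppow f b)"
  by (induction a) (simp_all add: pmult_pone_left pmult_assoc)

interpretation tw_prod: comm_monoid_set pmult pone
  by unfold_locales (rule pmult_assoc pmult_commute pmult_pone_right)+

lemma foldr_pmult_eq_tw_prod:
  "distinct xs \<Longrightarrow> foldr (\<lambda>v acc. pmult (P v) acc) xs pone = tw_prod.F P (set xs)"
  by (induction xs) (simp_all add: tw_prod.insert)

lemma ppow_sum: "finite S \<Longrightarrow> ppow f (sum c S) = tw_prod.F (\<lambda>v. ppow f (c v)) S"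
  by (induction S rule: finite_induct) (simp_all add: ppow_add tw_prod.insert)

section \<open>From \<open>q\<close>-exponents to \<open>r\<close>-exponents\<close>

lemma lookup_q_to_r:
  "lk (q_to_r n a) j = (if 1 \<le> j \<and> j \<le> n then \<Sum>i\<in>{1..j}. lk a i else 0)"
proof -
  have "lk (q_to_r n a) j = (\<Sum>i\<in>{1..n}. if i \<le> j \<and> j \<le> n then lk a i else 0)"
    unfolding q_to_r_def lookup_sum lookup_single by (rule sum.cong) (auto simp: when_def)
  also have "\<dots> = (\<Sum>i\<in>{i\<in>{1..n}. i \<le> j \<and> j \<le> n}. lk a i)"
    by (simp only: sum.inter_filter[OF finite_atLeastAtMost])
  also have "{i\<in>{1..n}. i \<le> j \<and> j \<le> n} = (if 1 \<le> j \<and> j \<le> n then {1..j} else {})"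
    by auto
  finally show ?thesis
    by (simp only: if_distrib[of "sum _"] sum.empty)
qed

lemma q_to_r_add: "q_to_r n (a + b) = q_to_r n a + q_to_r n b"
  by (rule poly_mapping_eqI) (simp add: lookup_q_to_r lookup_add sum.distrib)

lemma q_to_r_diff: "q_to_r n (a - b) = q_to_r n a - q_to_r n b"
  by (rule poly_mapping_eqI) (simp add: lookup_q_to_r lookup_minus sum_subtractf)

lemma q_to_r_uminus: "q_to_r n (- a) = - q_to_r n a"
  by (rule poly_mapping_eqI) (simp add: lookup_q_to_r sum_negf)

lemma q_to_r_zero: "q_to_r n 0 = 0"
  by (rule poly_mapping_eqI) (simp add: lookup_q_to_r)

lemma lookup_eq_diff_lookup_q_to_r:
  assumes "1 \<le> j" "j \<le> n"
  shows "lk a j = lk (q_to_r n a) j - lk (q_to_r n a) (j - 1)"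
proof -
  have "{1..j} = insert j {1..j - 1}"
    using assms by auto
  then have "lk (q_to_r n a) j = (\<Sum>i\<in>{1..j - 1}. lk a i) + lk a j"
    using assms by (simp add: lookup_q_to_r)
  moreover have "lk (q_to_r n a) (j - 1) = (\<Sum>i\<in>{1..j - 1}. lk a i)"
    using assms by (cases "j = 1") (auto simp: lookup_q_to_r)
  ultimately show ?thesis
    by simp
qed

lemma inj_on_q_to_r: "inj_on (q_to_r n) {a. ks a \<subseteq> {1..n}}"
proof (rule inj_onI, rule poly_mapping_eqI)
  fix a b j
  assume a: "a \<in> {a. ks a \<subseteq> {1..n}}" and b: "b \<in> {a. ks a \<subseteq> {1..n}}"
    and eq: "q_to_r n a = q_to_r n b"
  show "lk a j = lk b j"
  proof (cases "j \<in> {1..n}")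
    case True
    then show ?thesis
      using lookup_eq_diff_lookup_q_to_r[of j n a] lookup_eq_diff_lookup_q_to_r[of j n b]
      unfolding eq by simp
  next
    case False
    then have "j \<notin> ks a" "j \<notin> ks b"
      using a b by auto
    then show ?thesis
      by (simp add: in_keys_iff)
  qed
qed

lemma q_to_r_single:
  "1 \<le> i \<Longrightarrow> i \<le> n \<Longrightarrow> q_to_r n (Poly_Mapping.single i m) = (\<Sum>l\<in>{i..n}. Poly_Mapping.single l m)"
  by (rule poly_mapping_eqI) (auto simp: lookup_q_to_r lookup_sum lookup_single when_def)

section \<open>\<open>B\<close> on series supported in a sign cone\<close>

definition B_index :: "nat \<Rightarrow> (nat \<Rightarrow>\<^sub>0 nat) \<Rightarrow> nat \<Rightarrow> (nat \<Rightarrow>\<^sub>0 int) set" where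
  "B_index n e k = {a. ks a \<subseteq> {1..n} \<and> (\<forall>i. max (lk a i) 0 = int (lk e i))
                       \<and> (\<Sum>i\<in>{1..n}. nat (- lk a i)) = k}"

lemma B_map_eq_sum_B_index: "B_map n f (e, k) = (\<Sum>a\<in>B_index n e k. f (q_to_r n a))"
  by (simp only: B_map_def B_index_def prod.case)

lemma finite_B_index: "finite (B_index n e k)"
proof -
  let ?V = "{- int k..int (sum (lk e) (ks e))}"
  have "B_index n e k \<subseteq> {a. ks a \<subseteq> {1..n} \<and> (\<forall>i. lk a i \<in> ?V)}"
  proof clarify
    fix a assume a: "a \<in> B_index n e k"
    have "lk a i \<in> ?V" for i
    proof (cases "0 \<le> lk a i")
      case True
      then have "lk a i = int (lk e i)"
        using a by (auto simp: B_index_def dest: spec[of _ i])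
      then show ?thesis
        using True lookup_le_sum_keys[of e i] by (simp del: of_nat_sum)
    next
      case False
      then have "i \<in> ks a"
        by (simp add: in_keys_iff)
      then have "i \<in> {1..n}"
        using a by (auto simp: B_index_def)
      then have "nat (- lk a i) \<le> k"
        using a member_le_sum[of i "{1..n}" "\<lambda>i. nat (- lk a i)"] by (auto simp: B_index_def)
      then show ?thesis
        using False of_nat_0_le_iff[of "sum (lk e) (ks e)"] by (auto simp only: atLeastAtMost_iff nat_le_iff)
    qed
    then show "ks a \<subseteq> {1..n} \<and> (\<forall>i. lk a i \<in> ?V)"
      using a by (auto simp: B_index_def)
  qed
  then show ?thesis
    by (rule finite_subset) (intro finite_poly_mappings_with_keys_values; simp)
qed

definition sign_cone :: "nat set \<Rightarrow> nat set \<Rightarrow> (nat \<Rightarrow>\<^sub>0 int) set" where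
  "sign_cone L R = {a. \<forall>i. (i \<in> L \<longrightarrow> 0 \<le> lk a i) \<and> (i \<in> R \<longrightarrow> lk a i \<le> 0) \<and> (i \<notin> L \<union> R \<longrightarrow> lk a i = 0)}"

definition pos_part :: "(nat \<Rightarrow>\<^sub>0 int) \<Rightarrow> nat \<Rightarrow>\<^sub>0 nat" where
  "pos_part a = Poly_Mapping.map nat a"

lemma lookup_pos_part: "lk (pos_part a) i = nat (lk a i)"
  by (simp add: pos_part_def map.rep_eq when_def)

locale cone_setting =
  fixes n :: nat and L R :: "nat set"
  assumes disjoint: "L \<inter> R = {}" and bounded: "L \<union> R \<subseteq> {1..n}"
begin

abbreviation cone where "cone \<equiv> sign_cone L R"

definition neg_total :: "(nat \<Rightarrow>\<^sub>0 int) \<Rightarrow> nat" where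
  "neg_total a = (\<Sum>i\<in>{1..n}. nat (- lk a i))"

text \<open>\<open>B\<close> sends \<open>q\<^sup>a\<close> to the monomial \<open>t\<^sup>e w\<^sup>k\<close> with \<open>(e, k) = B_exponent a\<close>.\<close>

definition B_exponent :: "(nat \<Rightarrow>\<^sub>0 int) \<Rightarrow> (nat \<Rightarrow>\<^sub>0 nat) \<times> nat" where
  "B_exponent a = (pos_part a, neg_total a)"

definition B_fibre :: "(nat \<Rightarrow>\<^sub>0 nat) \<times> nat \<Rightarrow> (nat \<Rightarrow>\<^sub>0 int) set" where
  "B_fibre x = {a \<in> cone. B_exponent a = x}"

definition cone_supported :: "'a::comm_ring_1 laurent \<Rightarrow> bool" where
  "cone_supported f \<longleftrightarrow> (\<forall>c. f c \<noteq> 0 \<longrightarrow> c \<in> q_to_r n ` cone)"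

lemma finite_L_R: "finite (L \<union> R)"
  using bounded by (rule finite_subset) simp

lemma keys_cone: "a \<in> cone \<Longrightarrow> ks a \<subseteq> L \<union> R"
  by (auto simp: sign_cone_def in_keys_iff)

lemma keys_cone_bounded: "a \<in> cone \<Longrightarrow> ks a \<subseteq> {1..n}"
  using keys_cone bounded by blast

lemma cone_add: "a \<in> cone \<Longrightarrow> b \<in> cone \<Longrightarrow> a + b \<in> cone"
  by (auto simp: sign_cone_def lookup_add intro!: add_nonneg_nonneg add_nonpos_nonpos)

lemma lookup_cone_nonneg: "a \<in> cone \<Longrightarrow> i \<in> L \<Longrightarrow> 0 \<le> lk a i"
  by (simp add: sign_cone_def)

lemma lookup_cone_nonpos: "a \<in> cone \<Longrightarrow> i \<notin> L \<Longrightarrow> lk a i \<le> 0"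
  by (cases "i \<in> R") (simp_all add: sign_cone_def)

lemma zero_in_cone: "0 \<in> cone"
  by (auto simp: sign_cone_def)

lemma q_to_r_eq_cone: "a \<in> cone \<Longrightarrow> ks b \<subseteq> {1..n} \<Longrightarrow> q_to_r n b = q_to_r n a \<Longrightarrow> b = a"
  using inj_on_q_to_r keys_cone_bounded by (blast dest: inj_onD)

lemma q_to_r_eq_iff_cone: "a \<in> cone \<Longrightarrow> b \<in> cone \<Longrightarrow> q_to_r n a = q_to_r n b \<longleftrightarrow> a = b"
  using q_to_r_eq_cone keys_cone_bounded by blast

text \<open>On the cone each coordinate has a fixed sign, so positive and negative parts add up.\<close>

lemma B_exponent_add: "a \<in> cone \<Longrightarrow> b \<in> cone \<Longrightarrow> B_exponent (a + b) = B_exponent a + B_exponent b"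
proof -
  assume a: "a \<in> cone" and b: "b \<in> cone"
  have same_sign: "(0 \<le> lk a i \<and> 0 \<le> lk b i) \<or> (lk a i \<le> 0 \<and> lk b i \<le> 0)" for i
    using a b by (cases "i \<in> L") (simp_all add: lookup_cone_nonneg lookup_cone_nonpos)
  have pos: "nat (lk a i + lk b i) = nat (lk a i) + nat (lk b i)" for i
    using same_sign[of i] by auto
  have neg: "nat (- lk a i - lk b i) = nat (- lk a i) + nat (- lk b i)" for i
    using same_sign[of i] by auto
  show ?thesis
    by (auto intro!: poly_mapping_eqI simp: B_exponent_def neg_total_def lookup_pos_part lookup_add pos neg sum.distrib)
qed

lemma B_exponent_zero: "B_exponent 0 = 0"
  by (auto simp: B_exponent_def neg_total_def zero_prod_def intro!: poly_mapping_eqI simp: lookup_pos_part)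

lemma finite_cone_splittings: "finite {a \<in> cone. c - a \<in> cone}"
proof -
  let ?N = "\<Sum>i\<in>L \<union> R. \<bar>lk c i\<bar>"
  have "{a \<in> cone. c - a \<in> cone} \<subseteq> {a. ks a \<subseteq> L \<union> R \<and> (\<forall>i. lk a i \<in> {-?N..?N})}"
  proof clarify
    fix a assume a: "a \<in> cone" "c - a \<in> cone"
    have "\<bar>lk a i\<bar> \<le> ?N" for i
    proof (cases "i \<in> L \<union> R")
      case True
      have "\<bar>lk a i\<bar> \<le> \<bar>lk c i\<bar>"
        using a disjoint True by (auto simp: sign_cone_def lookup_minus dest!: spec[of _ i])
      also have "\<dots> \<le> ?N"
        using True finite_L_R by (intro member_le_sum) auto
      finally show ?thesis .
    next
      case False
      then show ?thesis
        using a by (auto simp: sign_cone_def intro: sum_nonneg)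
    qed
    then show "ks a \<subseteq> L \<union> R \<and> (\<forall>i. lk a i \<in> {-?N..?N})"
      using keys_cone[OF a(1)] by (auto simp: abs_le_iff minus_le_iff)
  qed
  then show ?thesis
    by (rule finite_subset) (intro finite_poly_mappings_with_keys_values finite_L_R; simp)
qed


lemma B_fibre_subset_B_index: "B_fibre (e, k) \<subseteq> B_index n e k"
  using keys_cone_bounded
  by (auto simp: B_fibre_def B_index_def B_exponent_def neg_total_def lookup_pos_part max_def)

lemma finite_B_fibre: "finite (B_fibre x)"
  using B_fibre_subset_B_index[of "fst x" "snd x"] finite_B_index by (metis prod.collapse finite_subset)

lemma B_map_eq_sum_B_fibre:
  assumes "cone_supported f"
  shows "B_map n f x = (\<Sum>a\<in>B_fibre x. f (q_to_r n a))"
proof (cases x)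
  case (Pair e k)
  have "f (q_to_r n a) = 0" if a: "a \<in> B_index n e k - B_fibre (e, k)" for a
  proof (rule ccontr)
    assume "f (q_to_r n a) \<noteq> 0"
    then obtain b where b: "b \<in> cone" "q_to_r n a = q_to_r n b"
      using assms by (auto simp: cone_supported_def)
    then have "a = b"
      using q_to_r_eq_cone[OF b(1)] a by (auto simp: B_index_def)
    moreover have "pos_part a = e"
    proof (rule poly_mapping_eqI)
      fix i
      have "max (lk a i) 0 = int (lk e i)"
        using a by (simp add: B_index_def)
      then show "lk (pos_part a) i = lk e i"
        by (simp add: lookup_pos_part max_def split: if_splits)
    qed
    ultimately have "a \<in> B_fibre (e, k)"
      using a b by (auto simp: B_fibre_def B_exponent_def neg_total_def B_index_def)
    then show False
      using a by simp
  qed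
  then show ?thesis
    unfolding Pair B_map_eq_sum_B_index
    by (intro sum.mono_neutral_right finite_B_index B_fibre_subset_B_index) auto
qed

lemma lmult_eq_sum_cone_splittings:
  assumes f: "cone_supported f" and g: "cone_supported g" and c: "c \<in> cone"
  shows "lmult f g (q_to_r n c) = (\<Sum>a\<in>{a \<in> cone. c - a \<in> cone}. f (q_to_r n a) * g (q_to_r n (c - a)))"
proof -
  let ?X = "{x. f x \<noteq> 0 \<and> g (q_to_r n c - x) \<noteq> 0}"
  let ?Y = "{a \<in> cone. c - a \<in> cone \<and> f (q_to_r n a) \<noteq> 0 \<and> g (q_to_r n (c - a)) \<noteq> 0}"
  have "?X \<subseteq> q_to_r n ` ?Y"
  proof
    fix x assume x: "x \<in> ?X"
    then obtain a where a: "a \<in> cone" "x = q_to_r n a"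
      using f by (auto simp: cone_supported_def)
    obtain b where b: "b \<in> cone" "q_to_r n c - x = q_to_r n b"
      using g x by (auto simp: cone_supported_def)
    have "ks (c - a) \<subseteq> {1..n}"
      using keys_cone_bounded[OF c] keys_cone_bounded[OF a(1)] keys_diff[of c a] by auto
    then have "c - a = b"
      using a b by (intro q_to_r_eq_cone[OF b(1)]) (simp_all add: q_to_r_diff)
    then show "x \<in> q_to_r n ` ?Y"
      using a b x by (auto simp: q_to_r_diff)
  qed
  then have X: "?X = q_to_r n ` ?Y"
    by (auto simp: q_to_r_diff)
  have inj: "inj_on (q_to_r n) ?Y"
    by (rule inj_on_subset[OF inj_on_q_to_r]) (use keys_cone_bounded in blast)
  have "lmult f g (q_to_r n c) = (\<Sum>x\<in>?X. f x * g (q_to_r n c - x))"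
    by (simp add: lmult_def)
  also have "\<dots> = (\<Sum>a\<in>?Y. f (q_to_r n a) * g (q_to_r n (c - a)))"
    unfolding X sum.reindex[OF inj] by (simp add: q_to_r_diff)
  also have "\<dots> = (\<Sum>a\<in>{a \<in> cone. c - a \<in> cone}. f (q_to_r n a) * g (q_to_r n (c - a)))"
    by (rule sum.mono_neutral_left[OF finite_cone_splittings]) auto
  finally show ?thesis .
qed

lemma cone_supported_lmult:
  assumes f: "cone_supported f" and g: "cone_supported g"
  shows "cone_supported (lmult f g)"
  unfolding cone_supported_def
proof (intro allI impI)
  fix x assume "lmult f g x \<noteq> 0"
  then have "{y. f y \<noteq> 0 \<and> g (x - y) \<noteq> 0} \<noteq> {}"
    unfolding lmult_def by (metis sum.empty)
  then obtain y where y: "f y \<noteq> 0" "g (x - y) \<noteq> 0"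
    by blast
  obtain a where a: "a \<in> cone" "y = q_to_r n a"
    using f y by (auto simp: cone_supported_def)
  obtain b where b: "b \<in> cone" "x - y = q_to_r n b"
    using g y by (auto simp: cone_supported_def)
  have "x = q_to_r n (a + b)"
    using a b by (simp add: q_to_r_add algebra_simps)
  then show "x \<in> q_to_r n ` cone"
    using cone_add[OF a(1) b(1)] by blast
qed

text \<open>The splittings \<open>c = a + b\<close> of the cone are regrouped by the divisor \<open>B_exponent a\<close> of the
  monomial \<open>x\<close> of \<open>T[[w]]\<close>, using \<open>B_exponent_add\<close>.\<close>

lemma B_map_lmult:
  assumes f: "cone_supported f" and g: "cone_supported g"
  shows "B_map n (lmult f g) = pmult (B_map n f) (B_map n g)"
proof
  fix x
  let ?F = "\<lambda>a. f (q_to_r n a)" and ?G = "\<lambda>a. g (q_to_r n a)"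
  have "B_map n (lmult f g) x = (\<Sum>c\<in>B_fibre x. \<Sum>a\<in>{a \<in> cone. c - a \<in> cone}. ?F a * ?G (c - a))"
    unfolding B_map_eq_sum_B_fibre[OF cone_supported_lmult[OF f g]]
    by (intro sum.cong refl lmult_eq_sum_cone_splittings[OF f g]) (simp add: B_fibre_def)
  also have "\<dots> = (\<Sum>(c, a)\<in>(SIGMA c:B_fibre x. {a \<in> cone. c - a \<in> cone}). ?F a * ?G (c - a))"
    by (rule sum.Sigma) (auto simp: finite_B_fibre finite_cone_splittings)
  also have "\<dots> = (\<Sum>(a, b)\<in>{(a, b). a \<in> cone \<and> b \<in> cone \<and> B_exponent a + B_exponent b = x}. ?F a * ?G b)"
    by (rule sum.reindex_bij_witness[where i="\<lambda>(a, b). (a + b, a)" and j="\<lambda>(c, a). (a, c - a)"])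
      (auto simp: B_fibre_def cone_add B_exponent_add[symmetric])
  also have "\<dots> = (\<Sum>(p, ab)\<in>(SIGMA p:tw_divisors x. B_fibre p \<times> B_fibre (x - p)). ?F (fst ab) * ?G (snd ab))"
    by (rule sum.reindex_bij_witness[where i="\<lambda>(p, ab). ab" and j="\<lambda>(a, b). (B_exponent a, (a, b))"])
      (auto simp: B_fibre_def tw_divisors_def tw_dvd_def tw_dvd_add_diff_cancel)
  also have "\<dots> = (\<Sum>p\<in>tw_divisors x. \<Sum>ab\<in>B_fibre p \<times> B_fibre (x - p). ?F (fst ab) * ?G (snd ab))"
    by (rule sum.Sigma[symmetric]) (auto simp: finite_tw_divisors finite_B_fibre)
  also have "\<dots> = (\<Sum>p\<in>tw_divisors x. (\<Sum>a\<in>B_fibre p. ?F a) * (\<Sum>b\<in>B_fibre (x - p). ?G b))"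
    by (simp add: sum_product sum.cartesian_product case_prod_unfold)
  also have "\<dots> = pmult (B_map n f) (B_map n g) x"
    by (simp add: pmult_eq_sum_tw_divisors B_map_eq_sum_B_fibre[OF f] B_map_eq_sum_B_fibre[OF g])
  finally show "B_map n (lmult f g) x = pmult (B_map n f) (B_map n g) x" .
qed

lemma sum_B_fibre_indicator:
  "b \<in> cone \<Longrightarrow> (\<Sum>a\<in>B_fibre x. if a = b then 1 else 0) = (if B_exponent b = x then 1 else 0)"
  by (simp add: finite_B_fibre) (auto simp: B_fibre_def)

lemma cone_supported_lone: "cone_supported lone"
  using zero_in_cone by (auto simp: cone_supported_def lone_def q_to_r_zero intro!: image_eqI[where x=0])

lemma B_map_lone: "B_map n lone = pone"
proof
  fix x
  have "B_map n lone x = (\<Sum>a\<in>B_fibre x. if a = 0 then 1 else 0)"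
    unfolding B_map_eq_sum_B_fibre[OF cone_supported_lone]
    by (intro sum.cong refl)
      (auto simp: lone_def B_fibre_def q_to_r_zero q_to_r_eq_iff_cone[OF _ zero_in_cone, symmetric])
  also have "\<dots> = pone x"
    using sum_B_fibre_indicator[OF zero_in_cone, of x] by (auto simp: pone_eq B_exponent_zero)
  finally show "B_map n lone x = pone x" .
qed

lemma cone_supported_lpow: "cone_supported f \<Longrightarrow> cone_supported (lpow f k)"
  by (induction k) (simp_all add: cone_supported_lone cone_supported_lmult)

lemma B_map_lpow: "cone_supported f \<Longrightarrow> B_map n (lpow f k) = ppow (B_map n f) k"
  by (induction k) (simp_all add: B_map_lone B_map_lmult cone_supported_lpow)

end

section \<open>The image of a variable\<close>

locale cone_edge = cone_setting +
  fixes i j :: nat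
  assumes left_end: "i \<in> L" and right_end: "j \<in> R" and edge_less: "i < j"
begin

lemma i_bounds: "1 \<le> i" "i \<le> n" and j_bounds: "1 \<le> j" "j \<le> n"
  using left_end right_end bounded by auto

lemma i_notin_R: "i \<notin> R" and j_notin_L: "j \<notin> L"
  using left_end right_end disjoint by auto

text \<open>In \<open>q\<close>-exponents, \<open>q\<^sub>i\<close> is \<open>single i 1\<close>, \<open>1/q\<^sub>j\<close> is \<open>- single j 1\<close> and \<open>(q\<^sub>i/q\<^sub>j)\<^sup>m\<close>
  is \<open>geom_exp m\<close>.\<close>

definition geom_exp :: "nat \<Rightarrow> nat \<Rightarrow>\<^sub>0 int" where
  "geom_exp m = Poly_Mapping.single i (int m) - Poly_Mapping.single j (int m)"

lemma single_i_in_cone: "Poly_Mapping.single i 1 \<in> cone"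
  using left_end i_notin_R by (auto simp: sign_cone_def lookup_single when_def)

lemma neg_single_j_in_cone: "- Poly_Mapping.single j 1 \<in> cone"
  using right_end j_notin_L by (auto simp: sign_cone_def lookup_single when_def)

lemma geom_exp_in_cone: "geom_exp m \<in> cone"
  using left_end right_end i_notin_R j_notin_L edge_less
  by (auto simp: sign_cone_def geom_exp_def lookup_minus lookup_single when_def)

lemma qexp_i_eq: "qexp n i = q_to_r n (Poly_Mapping.single i 1)"
  using i_bounds by (simp add: qexp_def q_to_r_single)

lemma uminus_qexp_j_eq: "- qexp n j = q_to_r n (- Poly_Mapping.single j 1)"
  using j_bounds by (simp add: qexp_def q_to_r_single q_to_r_uminus)

lemma q_to_r_geom_exp: "q_to_r n (geom_exp m) = (\<Sum>l\<in>{i..<j}. Poly_Mapping.single l (int m))"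
proof -
  have "q_to_r n (geom_exp m) =
      (\<Sum>l\<in>{i..n}. Poly_Mapping.single l (int m)) - (\<Sum>l\<in>{j..n}. Poly_Mapping.single l (int m))"
    using i_bounds j_bounds by (simp add: geom_exp_def q_to_r_diff q_to_r_single)
  also have "\<dots> = (\<Sum>l\<in>{i..<j}. Poly_Mapping.single l (int m))"
    using edge_less j_bounds
    by (auto intro!: poly_mapping_eqI simp: lookup_minus lookup_sum lookup_single when_def)
  finally show ?thesis .
qed

lemma B_exponent_single_i: "B_exponent (Poly_Mapping.single i 1) = (Poly_Mapping.single i 1, 0)"
  by (auto simp: B_exponent_def neg_total_def intro!: poly_mapping_eqI sum.neutral
      simp: lookup_pos_part lookup_single when_def)

lemma B_exponent_neg_single_j: "B_exponent (- Poly_Mapping.single j 1) = (0, 1)"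
proof -
  have "(\<Sum>l\<in>{1..n}. nat (- lk (- Poly_Mapping.single j (1::int)) l)) = (\<Sum>l\<in>{1..n}. if l = j then 1 else 0)"
    by (rule sum.cong) (auto simp: lookup_single when_def)
  also have "\<dots> = 1"
    using j_bounds by simp
  finally show ?thesis
    by (auto simp: B_exponent_def neg_total_def intro!: poly_mapping_eqI
        simp: lookup_pos_part lookup_single when_def)
qed

lemma B_exponent_geom_exp: "B_exponent (geom_exp m) = (Poly_Mapping.single i m, m)"
proof -
  have "(\<Sum>l\<in>{1..n}. nat (- lk (geom_exp m) l)) = (\<Sum>l\<in>{1..n}. if l = j then m else 0)"
    using edge_less by (intro sum.cong) (auto simp: geom_exp_def lookup_minus lookup_single when_def)
  also have "\<dots> = m"
    using j_bounds by simp
  finally show ?thesis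
    using edge_less by (auto simp: B_exponent_def neg_total_def geom_exp_def intro!: poly_mapping_eqI
        simp: lookup_pos_part lookup_single lookup_minus when_def)
qed

definition A_x_numerator :: "'a::comm_ring_1 \<Rightarrow> 'a \<Rightarrow> 'a laurent" where
  "A_x_numerator \<beta> \<alpha> = (\<lambda>c. - (lmon (qexp n i) c + \<beta> * lone c + \<alpha> * lmon (- qexp n j) c))"

lemma cone_supported_A_x_numerator: "cone_supported (A_x_numerator \<beta> \<alpha>)"
proof -
  have "qexp n i \<in> q_to_r n ` cone" "0 \<in> q_to_r n ` cone" "- qexp n j \<in> q_to_r n ` cone"
    using single_i_in_cone neg_single_j_in_cone zero_in_cone q_to_r_zero[of n, symmetric]
    unfolding qexp_i_eq uminus_qexp_j_eq by blast+
  then show ?thesis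
    unfolding cone_supported_def A_x_numerator_def lmon_def lone_def by (auto split: if_splits)
qed

lemma A_x_numerator_q_to_r:
  assumes "a \<in> cone"
  shows "A_x_numerator \<beta> \<alpha> (q_to_r n a) = - ((if a = Poly_Mapping.single i 1 then 1 else 0)
      + \<beta> * (if a = 0 then 1 else 0) + \<alpha> * (if a = - Poly_Mapping.single j 1 then 1 else 0))"
proof -
  have "q_to_r n a = qexp n i \<longleftrightarrow> a = Poly_Mapping.single i 1"
    unfolding qexp_i_eq using q_to_r_eq_iff_cone[OF assms single_i_in_cone] .
  moreover have "q_to_r n a = 0 \<longleftrightarrow> a = 0"
    using q_to_r_eq_iff_cone[OF assms zero_in_cone] by (simp add: q_to_r_zero)
  moreover have "q_to_r n a = - qexp n j \<longleftrightarrow> a = - Poly_Mapping.single j 1"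
    unfolding uminus_qexp_j_eq using q_to_r_eq_iff_cone[OF assms neg_single_j_in_cone] .
  ultimately show ?thesis
    unfolding A_x_numerator_def lmon_def lone_def by simp
qed

lemma B_map_A_x_numerator: "B_map n (A_x_numerator \<beta> \<alpha>) = (\<lambda>(e, k).
    - ((if e = Poly_Mapping.single i 1 \<and> k = 0 then 1 else 0) + (if e = 0 \<and> k = 0 then \<beta> else 0)
       + (if e = 0 \<and> k = 1 then \<alpha> else 0)))"
proof
  fix x :: "(nat \<Rightarrow>\<^sub>0 nat) \<times> nat"
  have "B_map n (A_x_numerator \<beta> \<alpha>) x = (\<Sum>a\<in>B_fibre x. - ((if a = Poly_Mapping.single i 1 then 1 else 0)
      + \<beta> * (if a = 0 then 1 else 0) + \<alpha> * (if a = - Poly_Mapping.single j 1 then 1 else 0)))"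
    unfolding B_map_eq_sum_B_fibre[OF cone_supported_A_x_numerator]
    by (intro sum.cong refl) (simp add: B_fibre_def A_x_numerator_q_to_r)
  also have "\<dots> = - ((if B_exponent (Poly_Mapping.single i 1) = x then 1 else 0)
      + \<beta> * (if B_exponent 0 = x then 1 else 0)
      + \<alpha> * (if B_exponent (- Poly_Mapping.single j 1) = x then 1 else 0))"
    unfolding sum_negf sum.distrib sum_distrib_left[symmetric] sum_B_fibre_indicator[OF single_i_in_cone]
      sum_B_fibre_indicator[OF zero_in_cone] sum_B_fibre_indicator[OF neg_single_j_in_cone]
    by (rule refl)
  also have "\<dots> = (\<lambda>(e, k). - ((if e = Poly_Mapping.single i 1 \<and> k = 0 then 1 else 0)
      + (if e = 0 \<and> k = 0 then \<beta> else 0) + (if e = 0 \<and> k = 1 then \<alpha> else 0))) x"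
    by (cases x) (auto simp: B_exponent_single_i B_exponent_neg_single_j B_exponent_zero zero_prod_def)
  finally show "B_map n (A_x_numerator \<beta> \<alpha>) x = (\<lambda>(e, k).
      - ((if e = Poly_Mapping.single i 1 \<and> k = 0 then 1 else 0) + (if e = 0 \<and> k = 0 then \<beta> else 0)
         + (if e = 0 \<and> k = 1 then \<alpha> else 0))) x" .
qed

lemma lgeom_q_to_r: "a \<in> cone \<Longrightarrow> lgeom i j (q_to_r n a) = (if \<exists>m. a = geom_exp m then 1 else 0)"
  unfolding lgeom_def q_to_r_geom_exp[symmetric] using q_to_r_eq_iff_cone geom_exp_in_cone by auto

lemma cone_supported_lgeom: "cone_supported (lgeom i j)"
  unfolding cone_supported_def lgeom_def q_to_r_geom_exp[symmetric] using geom_exp_in_cone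
  by (auto split: if_splits)

lemma B_map_lgeom: "B_map n (lgeom i j) = (\<lambda>(e, k). if e = Poly_Mapping.single i k then 1 else 0)"
proof
  fix x :: "(nat \<Rightarrow>\<^sub>0 nat) \<times> nat"
  have "B_map n (lgeom i j) x = (\<Sum>a\<in>B_fibre x. if \<exists>m. a = geom_exp m then 1 else 0)"
    unfolding B_map_eq_sum_B_fibre[OF cone_supported_lgeom]
    by (intro sum.cong refl) (simp add: B_fibre_def lgeom_q_to_r)
  also have "\<dots> = of_nat (card {a \<in> B_fibre x. \<exists>m. a = geom_exp m})"
    by (simp add: sum.If_cases finite_B_fibre Int_def conj_commute)
  also have "{a \<in> B_fibre x. \<exists>m. a = geom_exp m} =
      (if fst x = Poly_Mapping.single i (snd x) then {geom_exp (snd x)} else {})"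
    by (cases x) (auto simp: B_fibre_def B_exponent_geom_exp geom_exp_in_cone)
  finally show "B_map n (lgeom i j) x = (\<lambda>(e, k). if e = Poly_Mapping.single i k then 1 else 0) x"
    by (cases x) auto
qed

lemma cone_supported_A_x: "cone_supported (A_x n \<beta> \<alpha> i j)"
  unfolding A_x_def A_x_numerator_def[symmetric]
  by (intro cone_supported_lmult cone_supported_A_x_numerator cone_supported_lgeom)

lemma B_map_A_x: "B_map n (A_x n \<beta> \<alpha> i j) = E_t \<beta> \<alpha> i"
  unfolding A_x_def E_t_def A_x_numerator_def[symmetric]
  by (simp add: B_map_lmult cone_supported_A_x_numerator cone_supported_lgeom
      B_map_A_x_numerator B_map_lgeom)

end

section \<open>Pathless monomials\<close>

context cone_setting
begin

lemma cone_supported_foldr_A_x: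
  assumes "\<forall>v\<in>set vs. fst v \<in> L \<and> snd v \<in> R \<and> fst v < snd v"
  shows "cone_supported (foldr (\<lambda>v acc. lmult (lpow (A_x n \<beta> \<alpha> (fst v) (snd v)) (c v)) acc) vs lone)"
  using assms
proof (induction vs)
  case Nil
  then show ?case
    by (simp add: cone_supported_lone)
next
  case (Cons v vs)
  interpret edge: cone_edge n L R "fst v" "snd v"
    using Cons.prems by unfold_locales auto
  show ?case
    using Cons by (simp add: cone_supported_lmult cone_supported_lpow edge.cone_supported_A_x)
qed

lemma B_map_foldr_A_x:
  assumes "\<forall>v\<in>set vs. fst v \<in> L \<and> snd v \<in> R \<and> fst v < snd v"
  shows "B_map n (foldr (\<lambda>v acc. lmult (lpow (A_x n \<beta> \<alpha> (fst v) (snd v)) (c v)) acc) vs lone) =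
    foldr (\<lambda>v acc. pmult (ppow (E_t \<beta> \<alpha> (fst v)) (c v)) acc) vs pone"
  using assms
proof (induction vs)
  case Nil
  then show ?case
    by (simp add: B_map_lone)
next
  case (Cons v vs)
  interpret edge: cone_edge n L R "fst v" "snd v"
    using Cons.prems by unfold_locales auto
  show ?case
    using Cons by (simp add: B_map_lmult cone_supported_lpow B_map_lpow cone_supported_foldr_A_x
        edge.cone_supported_A_x edge.B_map_A_x)
qed

end

lemma cone_setting_pathless_mon:
  assumes "pathless_mon m" and "ks m \<subseteq> {(i, j). 1 \<le> i \<and> i < j \<and> j \<le> n}"
  shows "cone_setting n (fst ` ks m) (snd ` ks m)"
proof
  show "fst ` ks m \<inter> snd ` ks m = {}"
  proof (rule ccontr)
    assume "fst ` ks m \<inter> snd ` ks m \<noteq> {}"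
    then obtain h x k where hx: "(h, x) \<in> ks m" and xk: "(x, k) \<in> ks m"
      by force
    moreover have "h < x" "x < k"
      using hx xk assms(2) by auto
    moreover have "lk m (h, x) > 0" "lk m (x, k) > 0"
      using hx xk by (simp_all add: in_keys_iff)
    ultimately show False
      using assms(1) unfolding pathless_mon_def by blast
  qed
  show "fst ` ks m \<union> snd ` ks m \<subseteq> {1..n}"
    using assms(2) by force
qed

lemma B_map_A_mon:
  assumes "pathless_mon m" and range: "ks m \<subseteq> {(i, j). 1 \<le> i \<and> i < j \<and> j \<le> n}"
  shows "B_map n (A_mon n \<beta> \<alpha> m) = tw_prod.F (\<lambda>v. ppow (E_t \<beta> \<alpha> (fst v)) (lk m v)) (ks m)"
proof -
  interpret cone_setting n "fst ` ks m" "snd ` ks m"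
    using assms by (rule cone_setting_pathless_mon)
  have "B_map n (A_mon n \<beta> \<alpha> m) =
      foldr (\<lambda>v acc. pmult (ppow (E_t \<beta> \<alpha> (fst v)) (lk m v)) acc) (sorted_list_of_set (ks m)) pone"
    unfolding A_mon_def using range
    by (intro B_map_foldr_A_x) auto
  then show ?thesis
    by (simp add: foldr_pmult_eq_tw_prod)
qed

definition D_mon :: "((nat \<times> nat) \<Rightarrow>\<^sub>0 nat) \<Rightarrow> nat \<Rightarrow>\<^sub>0 nat" where
  "D_mon m = (\<Sum>v\<in>ks m. Poly_Mapping.single (fst v) (lk m v))"

lemma lookup_D_mon: "lk (D_mon m) i = (\<Sum>v\<in>{v \<in> ks m. fst v = i}. lk m v)"
  unfolding D_mon_def lookup_sum lookup_single
  by (simp add: when_def sum.inter_filter eq_commute)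

lemma keys_D_mon: "ks (D_mon m) = fst ` ks m"
proof -
  have "lk (D_mon m) i \<noteq> 0 \<longleftrightarrow> (\<exists>v\<in>ks m. fst v = i)" for i
    by (simp add: lookup_D_mon sum_eq_0_iff) (force simp: in_keys_iff)
  then show ?thesis
    by (auto simp: in_keys_iff[of _ "D_mon m"] image_iff; force)
qed

lemma E_mon_D_mon: "E_mon \<beta> \<alpha> (D_mon m) = tw_prod.F (\<lambda>v. ppow (E_t \<beta> \<alpha> (fst v)) (lk m v)) (ks m)"
proof -
  have "E_mon \<beta> \<alpha> (D_mon m) = tw_prod.F (\<lambda>i. ppow (E_t \<beta> \<alpha> i) (lk (D_mon m) i)) (fst ` ks m)"
    by (simp add: E_mon_def foldr_pmult_eq_tw_prod keys_D_mon)
  also have "\<dots> = tw_prod.F (\<lambda>i. tw_prod.F (\<lambda>v. ppow (E_t \<beta> \<alpha> (fst v)) (lk m v)) {v \<in> ks m. fst v = i}) (fst ` ks m)"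
    by (intro tw_prod.cong refl) (auto simp: lookup_D_mon ppow_sum intro: tw_prod.cong)
  also have "\<dots> = tw_prod.F (\<lambda>v. ppow (E_t \<beta> \<alpha> (fst v)) (lk m v)) (ks m)"
    by (rule tw_prod.group) simp_all
  finally show ?thesis .
qed

lemma E_mon_D_mon_eq_B_map_A_mon:
  assumes "pathless_mon m" and "ks m \<subseteq> {(i, j). 1 \<le> i \<and> i < j \<and> j \<le> n}"
  shows "E_mon \<beta> \<alpha> (D_mon m) = B_map n (A_mon n \<beta> \<alpha> m)"
  using assms by (simp add: E_mon_D_mon B_map_A_mon)

section \<open>Linearity\<close>

lemma E_map_eq_sum_superset:
  assumes "finite S" "ks p \<subseteq> S"
  shows "E_map \<beta> \<alpha> p x = (\<Sum>e\<in>S. lk p e * E_mon \<beta> \<alpha> e x)"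
  unfolding E_map_def using assms by (intro sum.mono_neutral_left) (auto simp: in_keys_iff)

lemma E_map_add: "E_map \<beta> \<alpha> (p + p') x = E_map \<beta> \<alpha> p x + E_map \<beta> \<alpha> p' x"
proof -
  have "ks (p + p') \<subseteq> ks p \<union> ks p'"
    by (rule keys_add)
  then show ?thesis
    by (simp add: E_map_eq_sum_superset[of "ks p \<union> ks p'"] lookup_add distrib_right sum.distrib)
qed

lemma E_map_sum: "finite M \<Longrightarrow> E_map \<beta> \<alpha> (\<Sum>m\<in>M. p m) x = (\<Sum>m\<in>M. E_map \<beta> \<alpha> (p m) x)"
  by (induction M rule: finite_induct) (simp add: E_map_def, simp add: E_map_add)

lemma E_map_single: "E_map \<beta> \<alpha> (Poly_Mapping.single e c) x = c * E_mon \<beta> \<alpha> e x"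
  by (simp add: E_map_eq_sum_superset[of "{e}"])

lemma B_map_linear: "B_map n (\<lambda>c. \<Sum>m\<in>M. h m * g m c) x = (\<Sum>m\<in>M. h m * B_map n (g m) x)"
  by (cases x) (simp add: B_map_def sum_distrib_left, rule sum.swap)

theorem corollary3p17:
  fixes q :: "((nat \<times> nat) \<Rightarrow>\<^sub>0 nat) \<Rightarrow>\<^sub>0 'k::comm_ring_1"
    and n :: nat and \<beta> \<alpha> :: 'k
  assumes "n \<ge> 1"
    and "\<forall>m\<in>Poly_Mapping.keys q. Poly_Mapping.keys m \<subseteq> {(i,j). 1 \<le> i \<and> i < j \<and> j \<le> n}"
    and "pathless q"
  shows "E_map \<beta> \<alpha> (D_map q) = B_map n (A_map n \<beta> \<alpha> q)"
proof
  fix x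
  have "E_mon \<beta> \<alpha> (D_mon m) = B_map n (A_mon n \<beta> \<alpha> m)" if "m \<in> ks q" for m
    using that assms(2,3) by (simp add: pathless_def E_mon_D_mon_eq_B_map_A_mon)
  then have "E_map \<beta> \<alpha> (D_map q) x = (\<Sum>m\<in>ks q. lk q m * B_map n (A_mon n \<beta> \<alpha> m) x)"
    unfolding D_map_def D_mon_def[symmetric] by (simp add: E_map_sum E_map_single)
  also have "\<dots> = B_map n (A_map n \<beta> \<alpha> q) x"
    unfolding A_map_def by (rule B_map_linear[symmetric])
  finally show "E_map \<beta> \<alpha> (D_map q) x = B_map n (A_map n \<beta> \<alpha> q) x" .
qed

end
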